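(* Let $(a_n)_{n\ge 0}$ be the $0/1$ sequence with $a_n=1$ if $n+1$ is a power of $2$ (i.e. $n=2^k-1$ for some integer $k\ge 0$) and $a_n=0$ otherwise. Call a permutation $\pi$ of $\{0,1,\dots,n-1\}$ nimble if for every $i\in\{0,\dots,n-1\}$ the number $i+\pi(i)+1$ is a power of $2$. Then for every integer $n\ge 1$ there exists a unique nimble permutation $\pi_n$ of $\{0,1,\dots,n-1\}$, and $$\det\left(a_{i+j}\right)_{i,j=0}^{n-1}=\operatorname{sgn}(\pi_n)\,a_{0+\pi_n(0)}a_{1+\pi_n(1)}\cdots a_{n-1+\pi_n(n-1)}=(-1)^{\binom{n}{2}}.$$
   Context: $a_n$ coincides with the Catalan number $C_n=\frac{1}{n+1}\binom{2n}{n}$ reduced modulo $2$ and regarded as an integer in $\{0,1\}$. A permutation is nimble exactly when $a_{0+\pi(0)}\cdots a_{n-1+\pi(n-1)}\neq 0$. *)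

theory Defs
  imports "HOL-Combinatorics.Permutations" "Jordan_Normal_Form.Determinant"
begin

definition is_pow2 :: "nat \<Rightarrow> bool" where
  "is_pow2 m \<longleftrightarrow> (\<exists>k::nat. m = 2 ^ k)"

definition a_seq :: "nat \<Rightarrow> int" where
  "a_seq m = (if is_pow2 (m + 1) then 1 else 0)"

definition nimble :: "nat \<Rightarrow> (nat \<Rightarrow> nat) \<Rightarrow> bool" where
  "nimble n p \<longleftrightarrow> p permutes {..<n} \<and> (\<forall>i<n. is_pow2 (i + p i + 1))"

definition hankel_a :: "nat \<Rightarrow> int mat" where
  "hankel_a n = mat n n (\<lambda>(i, j). a_seq (i + j))"

end

theory Submission
  imports Defs "HOL-Library.Log_Nat"
begin

text \<open>Let \<open>N\<close> be the power of two with \<open>n \<le> N < 2n\<close> and put \<open>m = N - n\<close>. For a nimble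
  permutation every sum \<open>i + \<pi>(i) + 1\<close> is a power of two below \<open>2N\<close>; on the top block
  \<open>{m..<n}\<close> it is forced to be \<open>N\<close>, so \<open>\<pi>\<close> reverses that block and restricts to a nimble
  permutation of \<open>{..<m}\<close>. Conversely, reversing the top block extends any nimble
  permutation of \<open>{..<m}\<close>. Induction on \<open>n\<close> yields existence, uniqueness and the sign,
  since \<open>(-1)^(n choose 2) = (-1)^(m choose 2) (-1)^((n - m) choose 2)\<close> as \<open>m (n - m)\<close> is even.
  In the Leibniz expansion of the Hankel determinant every permutation other than the
  nimble one hits a zero entry.\<close>

lemma is_pow2_eqI:
  assumes "is_pow2 x" "is_pow2 y" "x < 2 * y" "y < 2 * x"
  shows "x = y"
proof -
  obtain i j where ij: "x = 2 ^ i" "y = 2 ^ j"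
    using assms(1,2) unfolding is_pow2_def by blast
  have "(2::nat) ^ i < 2 ^ Suc j" "(2::nat) ^ j < 2 ^ Suc i"
    using assms(3,4) ij by simp_all
  then have "i < Suc j" "j < Suc i"
    by (metis power_less_imp_less_exp one_less_numeral_iff semiring_norm(76))+
  then show ?thesis
    using ij by simp
qed

lemma is_pow2_one_or_even: "is_pow2 N \<Longrightarrow> N = 1 \<or> even N"
  unfolding is_pow2_def by (metis dvd_power even_numeral neq0_conv power_0)

lemma ex_is_pow2_between:
  assumes "0 < n"
  shows "\<exists>N. is_pow2 N \<and> n \<le> N \<and> N < 2 * n"
  using assms le_two_power_ceillog2 two_power_ceillog2_gt unfolding is_pow2_def by blast

lemma nimble_permutes: "nimble n p \<Longrightarrow> p permutes {..<n}"
  unfolding nimble_def by blast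

lemma nimble_inv_into:
  assumes "nimble n p"
  shows "nimble n (inv_into UNIV p)"
proof -
  have p: "p permutes {..<n}"
    using assms by (rule nimble_permutes)
  have "is_pow2 (i + inv_into UNIV p i + 1)" if "i < n" for i
  proof -
    have "inv_into UNIV p i < n"
      using permutes_in_image[OF permutes_inv[OF p]] that by simp
    then have "is_pow2 (inv_into UNIV p i + p (inv_into UNIV p i) + 1)"
      using assms unfolding nimble_def by blast
    then show ?thesis
      using permutes_inverses(1)[OF p] by (simp add: add.commute)
  qed
  then show ?thesis
    using permutes_inv[OF p] unfolding nimble_def by blast
qed

lemma nimble_upper_half:
  assumes "nimble n p" "is_pow2 N" "n \<le> N" "i < n" "N < 2 * (i + 1)"
  shows "i + p i + 1 = N"
proof -
  have "p i < n"
    using permutes_in_image[OF nimble_permutes[OF assms(1)]] assms(4) by simp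
  then have "i + p i + 1 < 2 * N" "N < 2 * (i + p i + 1)"
    using assms(3,4,5) by simp_all
  moreover have "is_pow2 (i + p i + 1)"
    using assms(1,4) unfolding nimble_def by blast
  ultimately show ?thesis
    using is_pow2_eqI[OF _ assms(2)] by blast
qed

lemma nimble_top_block:
  assumes "nimble n p" "is_pow2 N" "n \<le> N" "N - n \<le> i" "i < n"
  shows "i + p i + 1 = N"
proof (cases "N < 2 * (i + 1)")
  case True
  then show ?thesis
    using nimble_upper_half assms by blast
next
  case False
  define j where "j = N - 1 - i"
  have "j < n" "N < 2 * (j + 1)"
    using False assms(4,5) unfolding j_def by auto
  then have "j + inv_into UNIV p j + 1 = N"
    using nimble_upper_half[OF nimble_inv_into[OF assms(1)] assms(2,3)] by blast
  then have "inv_into UNIV p j = i"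
    using False unfolding j_def by simp
  then have "p i = j"
    using permutes_inverses(1)[OF nimble_permutes[OF assms(1)], of j] by simp
  then show ?thesis
    using False unfolding j_def by simp
qed

lemma nimble_restrict:
  assumes "nimble n p" "is_pow2 N" "n \<le> N" "N < 2 * n"
  shows "nimble (N - n) (\<lambda>i. if i < N - n then p i else i)"
proof -
  have p: "p permutes {..<n}"
    using assms(1) by (rule nimble_permutes)
  have maps_into: "p i < N - n" if "i < N - n" for i
  proof (rule ccontr)
    assume "\<not> p i < N - n"
    then have "N - n \<le> p i"
      by simp
    moreover have "p i < n"
      using permutes_in_image[OF p] that assms(4) by simp
    ultimately have "p i + inv_into UNIV p (p i) + 1 = N"
      by (rule nimble_top_block[OF nimble_inv_into[OF assms(1)] assms(2,3)])
    then have "i + p i + 1 = N"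
      using permutes_inverses(2)[OF p] by simp
    then show False
      using that \<open>p i < n\<close> by simp
  qed
  have "inj_on (\<lambda>i. if i < N - n then p i else i) {..<N - n}"
    using inj_on_subset[OF permutes_inj[OF p], of "{..<N - n}"] by (simp add: inj_on_def)
  then have "(\<lambda>i. if i < N - n then p i else i) permutes {..<N - n}"
    by (rule inj_imp_permutes) (simp_all add: maps_into)
  moreover have "is_pow2 (i + p i + 1)" if "i < N - n" for i
    using assms(1,4) that unfolding nimble_def by simp
  ultimately show ?thesis
    unfolding nimble_def by simp
qed

lemma nimble_unique: "nimble n p \<Longrightarrow> nimble n q \<Longrightarrow> p = q"
proof (induction n arbitrary: p q rule: less_induct)
  case (less n)
  have p: "p permutes {..<n}" and q: "q permutes {..<n}"
    using less.prems by (simp_all add: nimble_permutes)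
  show ?case
  proof (cases "n = 0")
    case True
    then show ?thesis
      using p q by simp
  next
    case False
    then obtain N where N: "is_pow2 N" "n \<le> N" "N < 2 * n"
      using ex_is_pow2_between by blast
    have "N - n < n"
      using N(3) by simp
    then have same_restriction:
      "(\<lambda>i. if i < N - n then p i else i) = (\<lambda>i. if i < N - n then q i else i)"
      using less.IH nimble_restrict[OF less.prems(1) N] nimble_restrict[OF less.prems(2) N] by blast
    show ?thesis
    proof
      fix i
      consider "i < N - n" | "N - n \<le> i" "i < n" | "n \<le> i"
        by linarith
      then show "p i = q i"
      proof cases
        case 1
        then show ?thesis
          using fun_cong[OF same_restriction, of i] by simp
      next
        case 2
        then show ?thesis
          using nimble_top_block[OF less.prems(1) N(1,2)] nimble_top_block[OF less.prems(2) N(1,2)]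
          by (metis add_right_cancel add_left_cancel)
      next
        case 3
        then show ?thesis
          using permutes_not_in[OF p] permutes_not_in[OF q] by simp
      qed
    qed
  qed
qed

definition rev_interval :: "nat \<Rightarrow> nat \<Rightarrow> nat \<Rightarrow> nat" where
  "rev_interval a b i = (if a \<le> i \<and> i < b then a + b - 1 - i else i)"

lemma rev_interval_permutes: "rev_interval a b permutes {a..<b}"
  by (rule inj_imp_permutes) (auto simp: rev_interval_def inj_on_def)

lemma choose_two_add: "(m + l) choose 2 = (m choose 2) + (l choose 2) + m * l"
  using vandermonde[of m l 2] by (simp add: numeral_2_eq_2 atMost_Suc)

lemma sign_rev_interval: "sign (rev_interval a (a + l)) = (-1) ^ (l choose 2)"
proof (induction l arbitrary: a rule: less_induct)
  case (less l)
  show ?case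
  proof (cases "l < 2")
    case True
    then have "rev_interval a (a + l) = id"
      by (auto simp: fun_eq_iff rev_interval_def)
    with True show ?thesis
      by (auto simp: less_2_cases_iff choose_two)
  next
    case False
    then obtain l' where l: "l = l' + 2"
      by (metis add.commute le_add_diff_inverse not_less)
    have "rev_interval a (a + l) = transpose a (a + l' + 1) \<circ> rev_interval (Suc a) (Suc a + l')"
      unfolding l by (auto simp: fun_eq_iff rev_interval_def transpose_def)
    moreover have "permutation (rev_interval (Suc a) (Suc a + l'))"
      using rev_interval_permutes permutation_permutes by blast
    ultimately have "sign (rev_interval a (a + l)) = - sign (rev_interval (Suc a) (Suc a + l'))"
      by (simp add: sign_compose permutation_swap_id sign_swap_id)
    also have "\<dots> = - ((-1) ^ (l' choose 2))"
      using less.IH[of l' "Suc a"] l by simp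
    also have "\<dots> = (-1) ^ (l choose 2)"
      using choose_two_add[of l' 2] unfolding l by (simp add: power_add neg_one_even_power)
    finally show ?thesis .
  qed
qed

lemma minus_one_power_choose_two_split:
  assumes "is_pow2 N" "n \<le> N" "N < 2 * n"
  shows "(-1::int) ^ (n choose 2) = (-1) ^ ((N - n) choose 2) * (-1) ^ ((n - (N - n)) choose 2)"
proof -
  have "even ((N - n) * (n - (N - n)))"
    using is_pow2_one_or_even[OF assms(1)]
  proof
    assume "N = 1"
    then have "N - n = 0"
      using assms(2,3) by simp
    then show ?thesis
      by simp
  next
    assume "even N"
    moreover have "n - (N - n) = 2 * n - N"
      using assms(2,3) by simp
    ultimately show ?thesis
      by simp
  qed
  moreover have "n = (N - n) + (n - (N - n))"
    using assms(3) by simp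
  ultimately show ?thesis
    by (metis choose_two_add power_add neg_one_even_power mult_1_right)
qed

lemma nimble_extend:
  assumes "nimble (N - n) q" "is_pow2 N" "n \<le> N" "N < 2 * n"
  shows "nimble n (rev_interval (N - n) n \<circ> q)"
proof -
  have q: "q permutes {..<N - n}"
    using assms(1) by (rule nimble_permutes)
  have "rev_interval (N - n) n \<circ> q permutes {..<n}"
    by (rule permutes_compose[OF permutes_subset[OF q] permutes_subset[OF rev_interval_permutes]])
      (use assms(4) in auto)
  moreover have "is_pow2 (i + (rev_interval (N - n) n \<circ> q) i + 1)" if "i < n" for i
  proof (cases "i < N - n")
    case True
    then have "q i < N - n"
      using permutes_in_image[OF q] by simp
    then have "(rev_interval (N - n) n \<circ> q) i = q i"
      by (simp add: rev_interval_def)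
    then show ?thesis
      using assms(1) True unfolding nimble_def by simp
  next
    case False
    then have "(rev_interval (N - n) n \<circ> q) i = N - 1 - i"
      using permutes_not_in[OF q] that assms(3) by (simp add: rev_interval_def)
    then show ?thesis
      using assms(2) that assms(3) by simp
  qed
  ultimately show ?thesis
    unfolding nimble_def by blast
qed

lemma nimble_exists: "\<exists>p. nimble n p \<and> sign p = (-1) ^ (n choose 2)"
proof (induction n rule: less_induct)
  case (less n)
  show ?case
  proof (cases "n = 0")
    case True
    then show ?thesis
      by (intro exI[of _ id]) (simp add: nimble_def id_def choose_two)
  next
    case False
    then obtain N where N: "is_pow2 N" "n \<le> N" "N < 2 * n"
      using ex_is_pow2_between by blast
    then have "N - n < n"
      by simp
    then obtain q where q: "nimble (N - n) q" "sign q = (-1) ^ ((N - n) choose 2)"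
      using less.IH by blast
    have "permutation (rev_interval (N - n) n)" "permutation q"
      using permutation_permutes rev_interval_permutes nimble_permutes[OF q(1)] by blast+
    then have "sign (rev_interval (N - n) n \<circ> q) = sign (rev_interval (N - n) n) * sign q"
      by (rule sign_compose)
    also have "\<dots> = (-1) ^ ((n - (N - n)) choose 2) * (-1) ^ ((N - n) choose 2)"
      using sign_rev_interval[of "N - n" "n - (N - n)"] q(2) N(3) by simp
    also have "\<dots> = (-1) ^ (n choose 2)"
      using minus_one_power_choose_two_split[OF N] by simp
    finally show ?thesis
      using nimble_extend[OF q(1) N] by blast
  qed
qed

lemma det_single_permutation:
  fixes A :: "'a::comm_ring_1 mat"
  assumes "A \<in> carrier_mat n n" "p0 permutes {0..<n}"
    and "\<And>p. p permutes {0..<n} \<Longrightarrow> p \<noteq> p0 \<Longrightarrow> (\<Prod>i = 0..<n. A $$ (i, p i)) = 0"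
  shows "det A = signof p0 * (\<Prod>i = 0..<n. A $$ (i, p0 i))"
proof -
  have "det A = (\<Sum>p \<in> {p0}. signof p * (\<Prod>i = 0..<n. A $$ (i, p i)))"
    unfolding det_def'[OF assms(1)]
    by (rule sum.mono_neutral_right) (use assms finite_permutations in auto)
  then show ?thesis
    by simp
qed

lemma prod_a_seq:
  "(\<Prod>i<n. a_seq (i + p i)) = (if \<forall>i<n. is_pow2 (i + p i + 1) then 1 else 0)"
  by (auto simp: a_seq_def add.assoc)

lemma prod_hankel_a:
  assumes "p permutes {..<n}"
  shows "(\<Prod>i = 0..<n. hankel_a n $$ (i, p i)) = (\<Prod>i<n. a_seq (i + p i))"
  unfolding atLeast0LessThan
  by (rule prod.cong) (use permutes_in_image[OF assms] in \<open>auto simp: hankel_a_def\<close>)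

lemma prod_a_seq_nimble: "nimble n p \<Longrightarrow> (\<Prod>i<n. a_seq (i + p i)) = 1"
  unfolding prod_a_seq nimble_def by simp

lemma det_hankel_a:
  assumes "nimble n p0" "\<And>p. nimble n p \<Longrightarrow> p = p0"
  shows "det (hankel_a n) = sign p0"
proof -
  have "det (hankel_a n) = signof p0 * (\<Prod>i = 0..<n. hankel_a n $$ (i, p0 i))"
  proof (rule det_single_permutation)
    show "hankel_a n \<in> carrier_mat n n" "p0 permutes {0..<n}"
      using nimble_permutes[OF assms(1)] by (simp_all add: hankel_a_def atLeast0LessThan)
  next
    fix p assume "p permutes {0..<n}" "p \<noteq> p0"
    then have "p permutes {..<n}" "\<not> nimble n p"
      using assms(2) by (auto simp: atLeast0LessThan)
    then show "(\<Prod>i = 0..<n. hankel_a n $$ (i, p i)) = 0"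
      unfolding prod_hankel_a[OF \<open>p permutes {..<n}\<close>] prod_a_seq nimble_def by simp
  qed
  then show ?thesis
    using prod_hankel_a[OF nimble_permutes[OF assms(1)]] prod_a_seq_nimble[OF assms(1)] by simp
qed

theorem theorem1p1:
  fixes n :: nat
  assumes "n \<ge> 1"
  shows "(\<exists>!p. nimble n p) \<and>
         (\<forall>p. nimble n p \<longrightarrow>
            det (hankel_a n) = sign p * (\<Prod>i<n. a_seq (i + p i)) \<and>
            sign p * (\<Prod>i<n. a_seq (i + p i)) = (-1) ^ (n choose 2))"
proof -
  obtain p0 where p0: "nimble n p0" "sign p0 = (-1) ^ (n choose 2)"
    using nimble_exists by blast
  have unique: "p = p0" if "nimble n p" for p
    using nimble_unique[OF that p0(1)] .
  have "det (hankel_a n) = sign p0"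
    using det_hankel_a p0(1) unique by blast
  then show ?thesis
    using p0 unique prod_a_seq_nimble by (metis mult.right_neutral)
qed

end
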